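(* Fix $\alpha\in(0,1)$ and let $t=\lfloor K^{1+\alpha}\rfloor$. Then \[ \lim_{K\to\infty}\mathbb{P}\left(D_t<6K^{2\alpha}\right)=1. \]
   Context: Incremental construction. Fix an integer $K\ge2$, $[n]=\{1,\dots,n\}$. A random $K\times K$ matrix $\Psi$ is filled with $1,\dots,K^2$, the integer $s$ placed at step $s$. After step $t$, $R_t$, $C_t$ are the numbers of nonempty rows and columns (nonempty rows are $1,\dots,R_t$, nonempty columns $1,\dots,C_t$), and $M_t$ is the submatrix with rows $[R_t]$, columns $[C_t]$; $R_0=C_0=0$. Step 1: $\Psi(1,1)=1$ ($R_1=C_1=1$). For $t=1,\dots,K^2-1$, step $t+1$: with conditional probability $\rho_{t+1}=\frac{(K-R_t)K}{K^2-t}$ a new row is created ($R_{t+1}=R_t+1$), and independently with probability $\frac{K-C_t}{K}$ also a new column ($C_{t+1}=C_t+1$, $\Psi(R_{t+1},C_{t+1})=t+1$), otherwise $C_{t+1}=C_t$ and $\Psi(R_{t+1},Z)=t+1$ with $Z$ uniform in $[C_t]$. With probability $1-\rho_{t+1}$, no new row is created ($R_{t+1}=R_t$) and a uniformly random empty cell $(X,Y)$ among rows $[R_t]$ is chosen, generated by rejection sampling: cells are drawn independently and uniformly among the $R_tK$ cells of rows $[R_t]$ until an empty one is drawn; let $U_{t+1}=1$ if the first draw is empty and $U_{t+1}=0$ otherwise (so its conditional probability of being $1$ is $1-\frac{t}{R_tK}$). If $Y>C_t$ then $C_{t+1}=C_t+1$ and $\Psi(X,C_{t+1})=t+1$; otherwise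 $C_{t+1}=C_t$ and $\Psi(X,Y)=t+1$. Define $D_t$ as the number of steps $s\le t$ at which no new row is created and $U_s=0$. *)

theory Defs
  imports "HOL-Probability.Probability"
begin

text \<open>State of the incremental construction after t steps:
  (Psi, R, C, D), where Psi :: nat \<times> nat \<Rightarrow> nat is the matrix (1-based indices,
  entry 0 = empty cell), R, C are the numbers of nonempty rows/columns and
  D is the counter D_t.\<close>

type_synonym state = "(nat \<times> nat \<Rightarrow> nat) \<times> nat \<times> nat \<times> nat"

definition Dcount :: "state \<Rightarrow> nat" where
  "Dcount s = snd (snd (snd s))"

text \<open>Step t+1, performed from the state after step t (t \<ge> 1).
  Rejection sampling: the first draw is uniform over the R*K cells of rows [R];
  if it is empty it is the chosen cell (U = 1); otherwise (U = 0) subsequent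
  draws produce a uniformly random empty cell.\<close>

definition step :: "nat \<Rightarrow> nat \<Rightarrow> state \<Rightarrow> state pmf" where
  "step K t s = (case s of (Psi, R, C, D) \<Rightarrow>
     bind_pmf (bernoulli_pmf (real ((K - R) * K) / real (K^2 - t))) (\<lambda>newrow.
       if newrow then
         bind_pmf (bernoulli_pmf (real (K - C) / real K)) (\<lambda>newcol.
           if newcol then return_pmf (Psi((R+1, C+1) := t+1), R+1, C+1, D)
           else bind_pmf (pmf_of_set {1..C}) (\<lambda>Z.
                  return_pmf (Psi((R+1, Z) := t+1), R+1, C, D)))
       else
         bind_pmf (pmf_of_set ({1..R} \<times> {1..K})) (\<lambda>first.
           bind_pmf (if Psi first = 0 then return_pmf first
                     else pmf_of_set {c \<in> {1..R} \<times> {1..K}. Psi c = 0}) (\<lambda>(X, Y).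
             let D' = (if Psi first = 0 then D else D + 1) in
             if Y > C then return_pmf (Psi((X, C+1) := t+1), R, C+1, D')
             else return_pmf (Psi((X, Y) := t+1), R, C, D')))))"

text \<open>Distribution of the state after t steps (meaningful for t \<le> K^2).\<close>

primrec process :: "nat \<Rightarrow> nat \<Rightarrow> state pmf" where
  "process K 0 = return_pmf (\<lambda>_. 0, 0, 0, 0)"
| "process K (Suc t) =
     (if t = 0 then return_pmf ((\<lambda>_. 0)((1,1) := 1), 1, 1, 0)
      else bind_pmf (process K t) (step K t))"

end

theory Submission
  imports Defs "HOL-Analysis.Harmonic_Numbers" "HOL-Real_Asymp.Real_Asymp"
begin

(* Each step raises D by at most one, and only when no new row is created and the first
   rejection-sampling draw hits a filled cell; given the past this has probability at most
   t/(K^2 - t).  Hence E 2^(D_T) <= (1 + T/(K^2 - T))^T <= exp (2 T^2/K^2) <= exp (2x) with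
   x = K^(2 alpha), as soon as 2T <= K^2.  Markov's inequality for 2^(D_T) then gives
   P(D_T >= 6x) <= exp (2x) / 2^(6x) <= exp (-2x), because 6 ln 2 >= 4. *)

lemma bernoulli_pmf_clamp: "bernoulli_pmf p = bernoulli_pmf (min 1 (max 0 p))"
  by (rule pmf_eqI) (auto simp: bernoulli_pmf.rep_eq)

lemma True_in_set_pmf_bernoulli_iff: "True \<in> set_pmf (bernoulli_pmf p) \<longleftrightarrow> 0 < p"
  by (auto simp: set_pmf_iff bernoulli_pmf.rep_eq)

lemma emeasure_pmf_eq_of_bool:
  assumes "\<And>x. x \<in> set_pmf M \<Longrightarrow> x \<in> X \<longleftrightarrow> P"
  shows "emeasure M X = of_bool P"
proof -
  have "emeasure M X = emeasure M (if P then UNIV else {})"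
    using assms by (intro emeasure_eq_AE AE_pmfI) auto
  then show ?thesis by simp
qed

lemma nn_integral_two_pow_Suc_or_same:
  fixes f :: "'a \<Rightarrow> nat"
  assumes "\<And>x. x \<in> set_pmf M \<Longrightarrow> f x = d \<or> f x = Suc d"
  shows "(\<integral>\<^sup>+x. (2::ennreal) ^ f x \<partial>M) = 2 ^ d * (1 + emeasure M {x. f x = Suc d})"
proof -
  have "(\<integral>\<^sup>+x. (2::ennreal) ^ f x \<partial>M) = (\<integral>\<^sup>+x. 2 ^ d * (1 + indicator {x. f x = Suc d} x) \<partial>M)"
    using assms by (intro nn_integral_cong_AE AE_pmfI) (auto simp: indicator_def mult_2 mult_2_right)
  also have "\<dots> = 2 ^ d * (1 + emeasure M {x. f x = Suc d})"
    by (simp add: nn_integral_cmult nn_integral_add measure_pmf.emeasure_space_1)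
  finally show ?thesis .
qed

lemma prob_ge_le_two_pow_moment:
  fixes M :: "'a pmf" and f :: "'a \<Rightarrow> nat"
  assumes "(\<integral>\<^sup>+x. (2::ennreal) ^ f x \<partial>M) \<le> ennreal B" and "0 \<le> B"
  shows "measure_pmf.prob M {x. a \<le> real (f x)} \<le> B / 2 powr a"
proof -
  have "emeasure M {x. a \<le> real (f x)} = (\<integral>\<^sup>+x. indicator {x. a \<le> real (f x)} x \<partial>M)"
    by simp
  also have "\<dots> \<le> (\<integral>\<^sup>+x. 2 ^ f x * ennreal (1 / 2 powr a) \<partial>M)"
  proof (intro nn_integral_mono)
    fix x
    show "indicator {x. a \<le> real (f x)} x \<le> (2::ennreal) ^ f x * ennreal (1 / 2 powr a)"
    proof (cases "a \<le> real (f x)")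
      case True
      then have "2 powr a \<le> 2 ^ f x"
        by (metis powr_mono powr_realpow one_le_numeral zero_less_numeral)
      then have "1 \<le> 2 ^ f x * (1 / 2 powr a)"
        by (simp add: field_simps)
      then have "1 \<le> ennreal (2 ^ f x * (1 / 2 powr a))"
        by (metis ennreal_1 ennreal_leI)
      also have "\<dots> = 2 ^ f x * ennreal (1 / 2 powr a)"
        by (subst ennreal_mult) (simp_all add: ennreal_power[symmetric])
      finally show ?thesis
        using True by simp
    qed simp
  qed
  also have "\<dots> = (\<integral>\<^sup>+x. 2 ^ f x \<partial>M) * ennreal (1 / 2 powr a)"
    by (rule nn_integral_multc) simp
  also have "\<dots> \<le> ennreal B * ennreal (1 / 2 powr a)"
    using assms(1) by (rule mult_right_mono) simp
  also have "\<dots> = ennreal (B / 2 powr a)"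
    using assms(2) by (simp add: ennreal_mult[symmetric])
  finally show ?thesis
    using assms by (simp add: measure_pmf.emeasure_eq_measure)
qed

lemma measure_pmf_prob_less_eq_1_minus:
  fixes f :: "'a \<Rightarrow> real"
  shows "measure_pmf.prob M {x. f x < c} = 1 - measure_pmf.prob M {x. c \<le> f x}"
proof -
  have "{x. f x < c} = space (measure_pmf M) - {x. c \<le> f x}"
    by auto
  then show ?thesis
    by (simp only: measure_pmf.prob_compl sets_measure_pmf UNIV_I)
qed

lemma set_pmf_step:
  assumes "s' \<in> set_pmf (step K t (Psi, R, C, D))"
  obtains x R' C' D' where "s' = (Psi(x := Suc t), R', C', D')"
    and "R' = R \<or> R < K \<and> R' = Suc R" and "D' = D \<or> D' = Suc D"
  using assms unfolding step_def
  by (auto simp: Let_def True_in_set_pmf_bernoulli_iff zero_less_divide_iff zero_less_mult_iff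
      split: if_splits; blast)

lemma Dcount_step:
  assumes "s' \<in> set_pmf (step K t s)"
  shows "Dcount s' = Dcount s \<or> Dcount s' = Suc (Dcount s)"
  using assms by (cases s) (auto simp: Dcount_def elim: set_pmf_step)

definition filled :: "(nat \<times> nat \<Rightarrow> nat) \<Rightarrow> (nat \<times> nat) set" where
  "filled Psi = {c. Psi c \<noteq> 0}"

definition wf_state :: "nat \<Rightarrow> nat \<Rightarrow> state \<Rightarrow> bool" where
  "wf_state K t s \<longleftrightarrow> (case s of (Psi, R, _, _) \<Rightarrow>
     R \<le> K \<and> finite (filled Psi) \<and> card (filled Psi) \<le> t)"

lemma wf_state_step:
  assumes "wf_state K t s" and "s' \<in> set_pmf (step K t s)"
  shows "wf_state K (Suc t) s'"
proof -
  obtain Psi R C D where s: "s = (Psi, R, C, D)" by (cases s)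
  with assms have R: "R \<le> K" and fin: "finite (filled Psi)" and card: "card (filled Psi) \<le> t"
    by (auto simp: wf_state_def)
  obtain x R' C' D' where s': "s' = (Psi(x := Suc t), R', C', D')" and R': "R' = R \<or> R < K \<and> R' = Suc R"
    using assms(2) s by (auto elim: set_pmf_step)
  have sub: "filled (Psi(x := Suc t)) \<subseteq> insert x (filled Psi)"
    by (auto simp: filled_def)
  have "card (filled (Psi(x := Suc t))) \<le> card (insert x (filled Psi))"
    using fin by (intro card_mono[OF _ sub]) simp
  also have "\<dots> \<le> Suc t"
    using card by (simp add: card_insert_if fin)
  finally show ?thesis
    using R R' fin finite_subset[OF sub] by (auto simp: wf_state_def s')
qed

lemma wf_state_process:
  assumes "1 \<le> K" and "s \<in> set_pmf (process K t)"
  shows "wf_state K t s"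
  using assms(2)
proof (induction t arbitrary: s)
  case 0
  then show ?case by (simp add: wf_state_def filled_def)
next
  case (Suc t)
  show ?case
  proof (cases "t = 0")
    case True
    have "filled ((\<lambda>_. 0)((1, 1) := 1)) = {(1, 1)}" by (auto simp: filled_def)
    with Suc.prems True assms(1) show ?thesis by (simp add: wf_state_def)
  next
    case False
    with Suc.prems obtain s0 where "s0 \<in> set_pmf (process K t)" "s \<in> set_pmf (step K t s0)"
      by auto
    with Suc.IH wf_state_step show ?thesis by blast
  qed
qed

(* (k - r) k / (k^2 - t) is the probability of a new row, and c / (r k) that of the first
   draw hitting one of the c filled cells among the r k cells of the existing rows. *)
lemma rejection_round_bound:
  fixes r k t c :: real
  assumes "0 \<le> c" "c \<le> t" "t < r * k" "t < k\<^sup>2"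
  shows "(1 - (k - r) * k / (k\<^sup>2 - t)) * (c / (r * k)) \<le> t / (k\<^sup>2 - t)"
proof -
  have rk: "0 < r * k"
    using assms by linarith
  have "1 - (k - r) * k / (k\<^sup>2 - t) = (r * k - t) / (k\<^sup>2 - t)"
    using assms by (simp add: field_simps power2_eq_square)
  then have "(1 - (k - r) * k / (k\<^sup>2 - t)) * (c / (r * k)) = (r * k - t) * c / ((k\<^sup>2 - t) * (r * k))"
    by simp
  also have "\<dots> \<le> (r * k) * t / ((k\<^sup>2 - t) * (r * k))"
    using assms rk by (intro divide_right_mono mult_mono) auto
  also have "\<dots> = t / (k\<^sup>2 - t)"
    using rk by (auto simp: zero_less_mult_iff)
  finally show ?thesis .
qed

lemma emeasure_step_Dcount_Suc:
  "emeasure (step K t (Psi, R, C, D)) {s'. Dcount s' = Suc D}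
     = ennreal (1 - min 1 (real ((K - R) * K) / real (K\<^sup>2 - t)))
       * emeasure (pmf_of_set ({1..R} \<times> {1..K})) (filled Psi)"
proof -
  define E where "E = {s' :: state. Dcount s' = Suc D}"
  define \<rho> where "\<rho> = real ((K - R) * K) / real (K\<^sup>2 - t)"
  define box where "box = {1..R} \<times> {1..K}"
  define A where "A = bind_pmf (bernoulli_pmf (real (K - C) / real K)) (\<lambda>newcol.
           if newcol then return_pmf (Psi((R+1, C+1) := t+1), R+1, C+1, D)
           else bind_pmf (pmf_of_set {1..C}) (\<lambda>Z.
                  return_pmf (Psi((R+1, Z) := t+1), R+1, C, D)))"
  define Inner where "Inner = (\<lambda>first. bind_pmf (if Psi first = 0 then return_pmf first
                     else pmf_of_set {c \<in> box. Psi c = 0}) (\<lambda>(X, Y).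
             let D' = (if Psi first = 0 then D else D + 1) in
             if Y > C then return_pmf (Psi((X, C+1) := t+1), R, C+1, D')
             else return_pmf (Psi((X, Y) := t+1), R, C, D')))"
  define p where "p = min 1 \<rho>"
  have p: "0 \<le> p" "p \<le> 1"
    by (auto simp: p_def \<rho>_def)
  have "step K t (Psi, R, C, D) = bernoulli_pmf \<rho> \<bind> (\<lambda>b. if b then A else pmf_of_set box \<bind> Inner)"
    unfolding step_def \<rho>_def A_def Inner_def box_def by simp
  also have "bernoulli_pmf \<rho> = bernoulli_pmf p"
    by (subst bernoulli_pmf_clamp) (simp add: p_def \<rho>_def)
  finally have step: "step K t (Psi, R, C, D) = bernoulli_pmf p \<bind> (\<lambda>b. if b then A else pmf_of_set box \<bind> Inner)" .
  have A: "emeasure A E = 0"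
    by (rule emeasure_pmf_eq_of_bool[where P = False, simplified])
       (auto simp: A_def E_def Dcount_def split: if_splits)
  have Inner: "emeasure (Inner first) E = indicator (filled Psi) first" for first
    unfolding indicator_def by (rule emeasure_pmf_eq_of_bool)
      (cases first, auto simp: Inner_def E_def Dcount_def filled_def Let_def split: if_splits)
  show ?thesis
    unfolding \<rho>_def[symmetric] p_def[symmetric] box_def[symmetric] E_def[symmetric]
    using p by (simp add: step A Inner mult.commute)
qed

lemma emeasure_step_Dcount_Suc_le:
  assumes wf: "wf_state K t (Psi, R, C, D)" and tK: "t < K\<^sup>2"
  shows "emeasure (step K t (Psi, R, C, D)) {s'. Dcount s' = Suc D}
           \<le> ennreal (real t / real (K\<^sup>2 - t))"
proof (cases "R * K \<le> t")
  case True
  then have "K\<^sup>2 - t \<le> (K - R) * K"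
    by (simp add: diff_mult_distrib power2_eq_square)
  with tK have "1 \<le> real ((K - R) * K) / real (K\<^sup>2 - t)"
    by (auto simp: le_divide_eq_1 simp del: of_nat_diff of_nat_mult)
  then show ?thesis
    by (simp add: emeasure_step_Dcount_Suc)
next
  case False
  define box where "box = {1..R} \<times> {1..K}"
  have R: "R \<le> K" and fin: "finite (filled Psi)" and card: "card (filled Psi) \<le> t"
    using wf by (auto simp: wf_state_def)
  have "0 < R * K"
    using False by linarith
  then have "box \<noteq> {}" "finite box" "card box = R * K"
    by (auto simp: box_def zero_less_mult_iff)
  then have box: "emeasure (pmf_of_set box) (filled Psi)
      = ennreal (real (card (box \<inter> filled Psi)) / (real R * real K))"
    by (simp add: emeasure_pmf_of_set)
  have c: "real (card (box \<inter> filled Psi)) \<le> real t"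
    using fin card by (meson card_mono inf_le2 order_trans of_nat_le_iff)
  have tRK: "real t < real R * real K"
    using False by (metis not_le of_nat_less_iff of_nat_mult)
  have tK': "real t < real K ^ 2"
    using tK by (metis of_nat_less_iff of_nat_power)
  have den: "real (K\<^sup>2 - t) = real K ^ 2 - real t"
    using tK by (simp add: of_nat_diff)
  have "(K - R) * K \<le> K\<^sup>2 - t"
    using False by (simp add: diff_mult_distrib power2_eq_square)
  with tK have "real ((K - R) * K) / real (K\<^sup>2 - t) \<le> 1"
    by (auto simp: divide_le_eq_1 simp del: of_nat_diff of_nat_mult)
  then have p: "min 1 (real ((K - R) * K) / real (K\<^sup>2 - t))
      = (real K - real R) * real K / (real K ^ 2 - real t)"
    using R by (simp add: den of_nat_diff)
  then have \<rho>_le: "(real K - real R) * real K / (real K ^ 2 - real t) \<le> 1"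
    by (metis min.cobounded1)
  have "emeasure (step K t (Psi, R, C, D)) {s'. Dcount s' = Suc D}
      = ennreal (1 - (real K - real R) * real K / (real K ^ 2 - real t))
        * ennreal (real (card (box \<inter> filled Psi)) / (real R * real K))"
    unfolding emeasure_step_Dcount_Suc p box_def[symmetric] box ..
  also have "\<dots> \<le> ennreal (real t / real (K\<^sup>2 - t))"
    unfolding den using rejection_round_bound[OF _ c tRK tK'] tRK \<rho>_le
    by (subst ennreal_mult[symmetric]) (auto intro: ennreal_leI)
  finally show ?thesis .
qed

lemma nn_integral_two_pow_Dcount_step:
  assumes "wf_state K t s" and "t < K\<^sup>2"
  shows "(\<integral>\<^sup>+s'. (2::ennreal) ^ Dcount s' \<partial>step K t s)
           \<le> 2 ^ Dcount s * ennreal (1 + real t / real (K\<^sup>2 - t))"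
proof -
  obtain Psi R C D where s: "s = (Psi, R, C, D)"
    by (cases s)
  have "(\<integral>\<^sup>+s'. (2::ennreal) ^ Dcount s' \<partial>step K t s)
      = 2 ^ D * (1 + emeasure (step K t s) {s'. Dcount s' = Suc D})"
    using Dcount_step[of _ K t s] by (intro nn_integral_two_pow_Suc_or_same) (simp add: s Dcount_def)
  also have "\<dots> \<le> 2 ^ D * (1 + ennreal (real t / real (K\<^sup>2 - t)))"
    using emeasure_step_Dcount_Suc_le assms by (intro mult_left_mono add_left_mono) (auto simp: s)
  also have "\<dots> = 2 ^ Dcount s * ennreal (1 + real t / real (K\<^sup>2 - t))"
    by (simp add: s Dcount_def ennreal_plus)
  finally show ?thesis .
qed

lemma nn_integral_two_pow_Dcount_process:
  assumes "1 \<le> K" and "t \<le> T" and "T < K\<^sup>2"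
  shows "(\<integral>\<^sup>+s. (2::ennreal) ^ Dcount s \<partial>process K t)
           \<le> ennreal ((1 + real T / real (K\<^sup>2 - T)) ^ t)"
  using assms(2)
proof (induction t)
  case 0
  then show ?case
    by (simp add: Dcount_def)
next
  case (Suc t)
  define q where "q = 1 + real T / real (K\<^sup>2 - T)"
  have q: "1 \<le> q"
    by (simp add: q_def)
  show ?case
  proof (cases "t = 0")
    case True
    then show ?thesis
      using q by (simp add: Dcount_def flip: q_def)
  next
    case False
    have "(\<integral>\<^sup>+s'. (2::ennreal) ^ Dcount s' \<partial>process K (Suc t))
        = (\<integral>\<^sup>+s. \<integral>\<^sup>+s'. 2 ^ Dcount s' \<partial>step K t s \<partial>process K t)"
      using False by simp
    also have "\<dots> \<le> (\<integral>\<^sup>+s. 2 ^ Dcount s * ennreal q \<partial>process K t)"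
    proof (intro nn_integral_mono_AE AE_pmfI)
      fix s
      assume "s \<in> set_pmf (process K t)"
      then have "wf_state K t s"
        using wf_state_process assms(1) by blast
      moreover have "real t / real (K\<^sup>2 - t) \<le> real T / real (K\<^sup>2 - T)"
        using Suc.prems assms(3) by (intro frac_le) auto
      ultimately show "(\<integral>\<^sup>+s'. 2 ^ Dcount s' \<partial>step K t s) \<le> 2 ^ Dcount s * ennreal q"
        using Suc.prems assms(3) unfolding q_def
        by (intro order_trans[OF nn_integral_two_pow_Dcount_step] mult_left_mono ennreal_leI) auto
    qed
    also have "\<dots> = (\<integral>\<^sup>+s. 2 ^ Dcount s \<partial>process K t) * ennreal q"
      by (rule nn_integral_multc) simp
    also have "\<dots> \<le> ennreal (q ^ t) * ennreal q"
      using Suc by (intro mult_right_mono) (auto simp: q_def)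
    also have "\<dots> = ennreal (q ^ Suc t)"
      using q by (simp add: ennreal_mult[symmetric] mult.commute)
    finally show ?thesis
      unfolding q_def .
  qed
qed

lemma one_plus_ratio_pow_le_exp:
  fixes K T :: nat
  assumes "2 * T \<le> K\<^sup>2"
  shows "(1 + real T / real (K\<^sup>2 - T)) ^ T \<le> exp (2 * real T ^ 2 / real K ^ 2)"
proof (cases "T = 0")
  case False
  define q where "q = real T / real (K\<^sup>2 - T)"
  have "real (2 * T) \<le> real (K\<^sup>2)"
    using assms by (simp only: of_nat_le_iff)
  then have den: "real K ^ 2 / 2 \<le> real (K\<^sup>2 - T)"
    using assms by (simp add: of_nat_diff)
  have K: "0 < real K ^ 2"
    using assms False by (cases "K = 0") auto
  with den have "0 < real (K\<^sup>2 - T)"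
    by linarith
  have "(1 + q) ^ T \<le> exp q ^ T"
    by (intro power_mono) (auto simp: q_def add.commute exp_ge_add_one_self)
  also have "\<dots> = exp (real T * q)"
    by (simp add: exp_of_nat_mult)
  also have "\<dots> \<le> exp (2 * real T ^ 2 / real K ^ 2)"
  proof -
    have "real T * q \<le> real T * (real T / (real K ^ 2 / 2))"
      unfolding q_def using den K \<open>0 < real (K\<^sup>2 - T)\<close>
      by (intro mult_left_mono divide_left_mono) (auto intro: mult_pos_pos)
    also have "\<dots> = 2 * real T ^ 2 / real K ^ 2"
      by (simp add: power2_eq_square)
    finally show ?thesis
      by simp
  qed
  finally show ?thesis
    unfolding q_def .
qed simp

lemma prob_Dcount_ge_le_exp:
  fixes \<alpha> :: real
  assumes "1 \<le> K" and T: "real T \<le> real K powr (1 + \<alpha>)"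
    and K: "2 * real K powr (1 + \<alpha>) \<le> real K ^ 2"
  shows "measure_pmf.prob (process K T) {s. 6 * real K powr (2 * \<alpha>) \<le> real (Dcount s)}
           \<le> exp (- 2 * real K powr (2 * \<alpha>))"
proof -
  define x where "x = real K powr (2 * \<alpha>)"
  have "real (2 * T) \<le> real (K\<^sup>2)"
    using T K by simp
  then have TK: "2 * T \<le> K\<^sup>2"
    by (simp only: of_nat_le_iff)
  moreover have "1 \<le> K\<^sup>2"
    using assms(1) by simp
  ultimately have "T < K\<^sup>2"
    by linarith
  have "real T ^ 2 \<le> (real K powr (1 + \<alpha>)) ^ 2"
    using T by (intro power_mono) auto
  also have "\<dots> = real K powr (2 + 2 * \<alpha>)"
    using assms(1) by (simp add: powr_power algebra_simps)
  also have "\<dots> = real K ^ 2 * x"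
    using assms(1) by (simp add: powr_add x_def)
  finally have "2 * real T ^ 2 / real K ^ 2 \<le> 2 * x"
    using assms(1) by (simp add: field_simps)
  have "measure_pmf.prob (process K T) {s. 6 * x \<le> real (Dcount s)}
      \<le> (1 + real T / real (K\<^sup>2 - T)) ^ T / 2 powr (6 * x)"
    using assms(1) \<open>T < K\<^sup>2\<close>
    by (intro prob_ge_le_two_pow_moment nn_integral_two_pow_Dcount_process) auto
  also have "\<dots> \<le> exp (2 * x) / exp (4 * x)"
  proof (intro frac_le)
    show "(1 + real T / real (K\<^sup>2 - T)) ^ T \<le> exp (2 * x)"
      using one_plus_ratio_pow_le_exp[OF TK] \<open>2 * real T ^ 2 / real K ^ 2 \<le> 2 * x\<close>
      by (meson exp_le_cancel_iff order.trans)
    have "x * (2 / 3) \<le> x * ln 2"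
      using ln2_ge_two_thirds by (intro mult_left_mono) (auto simp: x_def)
    then have "4 * x \<le> 6 * x * ln 2"
      by linarith
    then show "exp (4 * x) \<le> 2 powr (6 * x)"
      by (simp add: powr_def mult.commute)
  qed auto
  also have "\<dots> = exp (- 2 * x)"
    by (simp add: exp_diff[symmetric])
  finally show ?thesis
    unfolding x_def .
qed

theorem lemma6p3:
  fixes \<alpha> :: real
  assumes "0 < \<alpha>" and "\<alpha> < 1"
  shows "((\<lambda>K::nat. measure_pmf.prob (process K (nat \<lfloor>real K powr (1 + \<alpha>)\<rfloor>))
            {s. real (Dcount s) < 6 * real K powr (2 * \<alpha>)}) \<longlongrightarrow> 1) sequentially"
proof -
  define tail where "tail K = measure_pmf.prob (process K (nat \<lfloor>real K powr (1 + \<alpha>)\<rfloor>))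
    {s. 6 * real K powr (2 * \<alpha>) \<le> real (Dcount s)}" for K :: nat
  have "eventually (\<lambda>K::nat. 2 * real K powr (1 + \<alpha>) \<le> real K ^ 2) sequentially"
    using assms by real_asymp
  then have upper: "eventually (\<lambda>K. tail K \<le> exp (- 2 * real K powr (2 * \<alpha>))) sequentially"
    using eventually_ge_at_top[of 1]
  proof eventually_elim
    case (elim K)
    have "real (nat \<lfloor>real K powr (1 + \<alpha>)\<rfloor>) \<le> real K powr (1 + \<alpha>)"
      by (simp add: of_nat_nat)
    then show ?case
      unfolding tail_def by (rule prob_Dcount_ge_le_exp[OF elim(2) _ elim(1)])
  qed
  have lower: "eventually (\<lambda>K. 0 \<le> tail K) sequentially"
    by (simp add: tail_def)
  have "((\<lambda>K::nat. exp (- 2 * real K powr (2 * \<alpha>))) \<longlongrightarrow> 0) sequentially"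
    using assms by real_asymp
  with lower upper have "tail \<longlonglongrightarrow> 0"
    by (rule tendsto_sandwich[OF _ _ tendsto_const])
  then show ?thesis
    using tendsto_diff[OF tendsto_const[of 1], of tail 0]
    by (simp add: tail_def measure_pmf_prob_less_eq_1_minus)
qed

end
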